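(* Let $L^x,L^y>0$, let $i\neq j$ be two boxes, each box $k\in\{i,j\}$ having center $(c^x_k,c^y_k)$, side lengths $(\ell^x_k,\ell^y_k)$ and constants $lb^s_k>0$, $ub^s_k$. Let $$Q^{ub}=\{(c_i,c_j,\ell_i,\ell_j)\in\mathbb{R}^8:\ \tfrac12\ell^s_k\le c^s_k\le L^s-\tfrac12\ell^s_k,\ lb^s_k\le\ell^s_k\le ub^s_k\ \ \forall s\in\{x,y\},k\in\{i,j\}\}.$$ Let $E^8$ be the set of $(c,\ell,z)$ with $(c,\ell)=(c_i,c_j,\ell_i,\ell_j)\in Q^{ub}$, $z=(z^s_{p,q})_{s\in\{x,y\},(p,q)\in\{(i,j),(j,i)\}}\in\{0,1\}^4$ not identically zero, $z^s_{i,j}+z^s_{j,i}\le1$ for each $s$, $z^s_{p,q}=1\Rightarrow\mathscr{B}_p\leftarrow_s\mathscr{B}_q$, and $z^s_{i,j}=z^s_{j,i}=0\Rightarrow(\mathscr{B}_i\not\leftarrow_s\mathscr{B}_j$ and $\mathscr{B}_j\not\leftarrow_s\mathscr{B}_i)$. Let $E^U$ be the set of $(c,\ell,u)$ with $(c,\ell)\in Q^{ub}$, $u=(u^s_{p,q})\in\{0,1\}^4$ having exactly one entry equal to $1$, and $u^s_{p,q}=1\Rightarrow\mathscr{B}_p\leftarrow_s\mathscr{B}_q$. Then for any $\{r,s\}=\{x,y\}$ and $\{p,q\}=\{i,j\}$: (a) $c^s_p+ub^s_q(1-z^s_{q,p})\ge\tfrac12\ell^s_p+\ell^s_q$ holds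 for all points of $E^8$; (b) if $L^s<ub^s_p+ub^s_q$, then $z^r_{p,q}+z^r_{q,p}\ge\dfrac{\ell^s_p+\ell^s_q-L^s}{ub^s_p+ub^s_q-L^s}$ holds for all points of $E^8$, and $u^r_{p,q}+u^r_{q,p}\ge\dfrac{\ell^s_p+\ell^s_q-L^s}{ub^s_p+ub^s_q-L^s}$ holds for all points of $E^U$.
   Context: $\mathscr{B}_p\leftarrow_s\mathscr{B}_q$ means $c^s_p+\tfrac12\ell^s_p\le c^s_q-\tfrac12\ell^s_q$, and $\mathscr{B}_p\not\leftarrow_s\mathscr{B}_q$ means $c^s_p+\tfrac12\ell^s_p\ge c^s_q-\tfrac12\ell^s_q$. $E^8=\operatorname{Em}(Q^{ub},D^8,C^8)$ and $E^U=\operatorname{Em}(Q^{ub},D^4,U^4)$ in the paper's notation. In the paper $ub^s_k=\min\{\sqrt{\alpha_k\beta_k},L^s\}$, $lb^s_k=\beta_k/ub^s_k$. *)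

theory Defs
  imports Complex_Main
begin

datatype axis = X | Y
datatype box = I | J

type_synonym coords = "box \<Rightarrow> axis \<Rightarrow> real"
type_synonym binvars = "axis \<Rightarrow> box \<Rightarrow> box \<Rightarrow> real"

definition left_of :: "coords \<Rightarrow> coords \<Rightarrow> axis \<Rightarrow> box \<Rightarrow> box \<Rightarrow> bool" where
  "left_of c l s p q \<longleftrightarrow> c p s + l p s / 2 \<le> c q s - l q s / 2"

definition not_left_of :: "coords \<Rightarrow> coords \<Rightarrow> axis \<Rightarrow> box \<Rightarrow> box \<Rightarrow> bool" where
  "not_left_of c l s p q \<longleftrightarrow> c p s + l p s / 2 \<ge> c q s - l q s / 2"

definition Q_ub :: "(axis \<Rightarrow> real) \<Rightarrow> coords \<Rightarrow> coords \<Rightarrow> (coords \<times> coords) set" where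
  "Q_ub L lb ub = {(c, l). \<forall>s k. l k s / 2 \<le> c k s \<and> c k s \<le> L s - l k s / 2
                             \<and> lb k s \<le> l k s \<and> l k s \<le> ub k s}"

text \<open>Only the entries z s p q with p \<noteq> q are meaningful (four binary variables).\<close>
definition E8 :: "(axis \<Rightarrow> real) \<Rightarrow> coords \<Rightarrow> coords \<Rightarrow> (coords \<times> coords \<times> binvars) set" where
  "E8 L lb ub = {(c, l, z). (c, l) \<in> Q_ub L lb ub
      \<and> (\<forall>s p q. p \<noteq> q \<longrightarrow> z s p q \<in> {0, 1})
      \<and> (\<exists>s p q. p \<noteq> q \<and> z s p q \<noteq> 0)
      \<and> (\<forall>s. z s I J + z s J I \<le> 1)
      \<and> (\<forall>s p q. p \<noteq> q \<longrightarrow> z s p q = 1 \<longrightarrow> left_of c l s p q)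
      \<and> (\<forall>s. z s I J = 0 \<and> z s J I = 0 \<longrightarrow>
              not_left_of c l s I J \<and> not_left_of c l s J I)}"

definition EU :: "(axis \<Rightarrow> real) \<Rightarrow> coords \<Rightarrow> coords \<Rightarrow> (coords \<times> coords \<times> binvars) set" where
  "EU L lb ub = {(c, l, u). (c, l) \<in> Q_ub L lb ub
      \<and> (\<forall>s p q. p \<noteq> q \<longrightarrow> u s p q \<in> {0, 1})
      \<and> card {(s, p, q). p \<noteq> q \<and> u s p q = 1} = 1
      \<and> (\<forall>s p q. p \<noteq> q \<longrightarrow> u s p q = 1 \<longrightarrow> left_of c l s p q)}"

end

theory Submission
  imports Defs
begin

text \<open>Part (a) is a big-M argument: if z^s_{q,p} = 0 it follows from c^s_p >= l^s_p/2 and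
  l^s_q <= ub^s_q, and if z^s_{q,p} = 1 then box q lies before box p, so
  c^s_p >= c^s_q + l^s_q/2 + l^s_p/2 >= l^s_q + l^s_p/2.
  For part (b), every point of E^8 or E^U has some binary variable z^t_{p',q'} equal to 1.
  If t = s, the boxes are separated along s, so l^s_p + l^s_q <= L^s and the right-hand side
  is nonpositive; if t = r, the left-hand side is at least 1, while l <= ub bounds the
  right-hand side by 1.\<close>

lemma axis_two_valued: "(r::axis) \<noteq> s \<Longrightarrow> a = r \<or> a = s"
  by (cases a; cases r; cases s) auto

lemma box_two_valued: "(p::box) \<noteq> q \<Longrightarrow> k = p \<or> k = q"
  by (cases k; cases p; cases q) auto

lemma Q_ub_bounds:
  assumes "(c, l) \<in> Q_ub L lb ub"
  shows "l k s / 2 \<le> c k s" "c k s \<le> L s - l k s / 2" "l k s \<le> ub k s"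
  using assms unfolding Q_ub_def by auto

lemma left_of_lengths_le:
  assumes "(c, l) \<in> Q_ub L lb ub" "left_of c l s a b"
  shows "l a s + l b s \<le> L s"
  using Q_ub_bounds(1)[OF assms(1), of a s] Q_ub_bounds(2)[OF assms(1), of b s] assms(2)
  unfolding left_of_def by linarith

lemma E8_big_M_valid:
  assumes "(c, l, z) \<in> E8 L lb ub" "p \<noteq> q"
  shows "l p s / 2 + l q s \<le> c p s + ub q s * (1 - z s q p)"
proof -
  have Q: "(c, l) \<in> Q_ub L lb ub" and "z s q p \<in> {0, 1}"
    and left: "z s q p = 1 \<Longrightarrow> left_of c l s q p"
    using assms unfolding E8_def by auto
  then consider "z s q p = 0" | "z s q p = 1" by blast
  then show ?thesis
    using Q_ub_bounds[OF Q, of p s] Q_ub_bounds[OF Q, of q s] left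
    by cases (auto simp: left_of_def)
qed

lemma divide_le_if_one_le_or_nonpos:
  fixes a d x :: real
  assumes "0 < d" "a \<le> d" "0 \<le> x" "1 \<le> x \<or> a \<le> 0"
  shows "a / d \<le> x"
proof -
  have "a / d \<le> 1" using assms(1,2) by simp
  moreover have "a \<le> 0 \<Longrightarrow> a / d \<le> 0" using assms(1) by (simp add: divide_nonpos_pos)
  ultimately show ?thesis using assms(3,4) by linarith
qed

lemma active_pair_cover:
  fixes z :: binvars
  assumes Q: "(c, l) \<in> Q_ub L lb ub"
    and binary: "\<forall>t p q. p \<noteq> q \<longrightarrow> z t p q \<in> {0, 1}"
    and active_left: "\<forall>t p q. p \<noteq> q \<longrightarrow> z t p q = 1 \<longrightarrow> left_of c l t p q"
    and active: "p' \<noteq> q'" "z t p' q' = 1"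
    and "r \<noteq> s" "p \<noteq> q"
  shows "1 \<le> z r p q + z r q p \<or> l p s + l q s \<le> L s"
proof -
  have pair: "(p', q') = (p, q) \<or> (p', q') = (q, p)"
    using box_two_valued[OF \<open>p \<noteq> q\<close>, of p'] box_two_valued[OF \<open>p \<noteq> q\<close>, of q'] active(1)
    by auto
  have nonneg: "0 \<le> z r p q" "0 \<le> z r q p"
    using binary \<open>p \<noteq> q\<close> by (metis empty_iff insert_iff order_refl zero_le_one)+
  consider "t = r" | "t = s" using axis_two_valued[OF \<open>r \<noteq> s\<close>] by blast
  then show ?thesis
  proof cases
    case 1
    then show ?thesis using pair active(2) nonneg by auto
  next
    case 2
    then have "l p' s + l q' s \<le> L s"
      using left_of_lengths_le[OF Q] active active_left by blast
    then show ?thesis using pair by auto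
  qed
qed

lemma separation_cut_valid:
  fixes z :: binvars
  assumes Q: "(c, l) \<in> Q_ub L lb ub"
    and binary: "\<forall>t p q. p \<noteq> q \<longrightarrow> z t p q \<in> {0, 1}"
    and active_left: "\<forall>t p q. p \<noteq> q \<longrightarrow> z t p q = 1 \<longrightarrow> left_of c l t p q"
    and active: "\<exists>t p q. p \<noteq> q \<and> z t p q = 1"
    and rs: "r \<noteq> s" and pq: "p \<noteq> q"
    and big: "L s < ub p s + ub q s"
  shows "(l p s + l q s - L s) / (ub p s + ub q s - L s) \<le> z r p q + z r q p"
proof (rule divide_le_if_one_le_or_nonpos)
  show "0 < ub p s + ub q s - L s" using big by simp
  show "l p s + l q s - L s \<le> ub p s + ub q s - L s"
    using Q_ub_bounds(3)[OF Q, of p s] Q_ub_bounds(3)[OF Q, of q s] by simp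
  show "0 \<le> z r p q + z r q p"
    using binary pq by (metis add_nonneg_nonneg insert_iff order_refl singletonD zero_le_one)
  obtain t p' q' where "p' \<noteq> q'" "z t p' q' = 1" using active by blast
  from active_pair_cover[OF Q binary active_left this rs pq]
  show "1 \<le> z r p q + z r q p \<or> l p s + l q s - L s \<le> 0" by simp
qed

lemma E8_separation_cut_valid:
  assumes E8: "(c, l, z) \<in> E8 L lb ub" and "r \<noteq> s" "p \<noteq> q" "L s < ub p s + ub q s"
  shows "(l p s + l q s - L s) / (ub p s + ub q s - L s) \<le> z r p q + z r q p"
proof -
  have hyps: "(c, l) \<in> Q_ub L lb ub" "\<forall>t p q. p \<noteq> q \<longrightarrow> z t p q \<in> {0, 1}"
    "\<forall>t p q. p \<noteq> q \<longrightarrow> z t p q = 1 \<longrightarrow> left_of c l t p q"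
    and active: "\<exists>t p q. p \<noteq> q \<and> z t p q = 1"
    using E8 unfolding E8_def by fastforce+
  from separation_cut_valid[where z = z, OF hyps active assms(2-)] show ?thesis .
qed

lemma EU_separation_cut_valid:
  assumes EU: "(c, l, u) \<in> EU L lb ub" and "r \<noteq> s" "p \<noteq> q" "L s < ub p s + ub q s"
  shows "(l p s + l q s - L s) / (ub p s + ub q s - L s) \<le> u r p q + u r q p"
proof -
  have hyps: "(c, l) \<in> Q_ub L lb ub" "\<forall>t p q. p \<noteq> q \<longrightarrow> u t p q \<in> {0, 1}"
    "\<forall>t p q. p \<noteq> q \<longrightarrow> u t p q = 1 \<longrightarrow> left_of c l t p q"
    using EU unfolding EU_def by auto
  have "card {(t, p, q). p \<noteq> q \<and> u t p q = 1} = 1" using EU unfolding EU_def by simp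
  then have "{(t, p, q). p \<noteq> q \<and> u t p q = 1} \<noteq> {}" by force
  then have "\<exists>t p q. p \<noteq> q \<and> u t p q = 1" by blast
  from separation_cut_valid[where z = u, OF hyps this assms(2-)] show ?thesis .
qed

theorem proposition6p3:
  fixes L :: "axis \<Rightarrow> real" and lb ub :: coords and r s :: axis and p q :: box
  assumes L_pos: "\<And>a. L a > 0"
    and lb_pos: "\<And>k a. lb k a > 0"
    and rs: "r \<noteq> s" and pq: "p \<noteq> q"
  shows "(\<forall>(c, l, z) \<in> E8 L lb ub.
            c p s + ub q s * (1 - z s q p) \<ge> l p s / 2 + l q s)
       \<and> (L s < ub p s + ub q s \<longrightarrow>
            (\<forall>(c, l, z) \<in> E8 L lb ub.
               z r p q + z r q p \<ge> (l p s + l q s - L s) / (ub p s + ub q s - L s))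
          \<and> (\<forall>(c, l, u) \<in> EU L lb ub.
               u r p q + u r q p \<ge> (l p s + l q s - L s) / (ub p s + ub q s - L s)))"
  using E8_big_M_valid[OF _ pq] E8_separation_cut_valid[OF _ rs pq]
    EU_separation_cut_valid[OF _ rs pq] by fast

end
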